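(* Consider the sensor-network Kalman filtering model described in the context, and suppose that the network state process $\{\Xi(k)\}_{k\in\mathbb{N}_0}$ is a time-homogeneous Markov chain with transition probabilities $p_{ij}=\Pr\{\Xi(k+1)=j\mid \Xi(k)=i\}$, $i,j\in\mathbb{B}$, and that the power and bit-rate control laws are of the form $u_m(k)=\kappa_m(\Xi(k),h_1(k),\dots,h_M(k))$, $b_m(k)=\eta_m(\Xi(k),h_1(k),\dots,h_M(k))$ for (possibly nonlinear) mappings $\kappa_m,\eta_m$. For $i\in\mathbb{B}$ let $$\nu_i=\sum_{j\in\mathbb{B}}p_{ij}\Pr\{r(k)=0\mid \Xi(k)=j\},$$ the conditional probability that $C(k)$ does not have full column rank given $\Xi(k-1)=i$. If there exists $\rho\in[0,1)$ such that $$\max_{(i,k)\in\mathbb{B}\times\mathbb{N}_0}\nu_i\,\|A(k)\|^2\le\rho,$$ then the Kalman filter is exponentially bounded, i.e., there exist finite constants $\alpha,\beta$ and $\rho'\in[0,1)$ such that $\mathbf{E}\{\operatorname{tr}P(k\mid k-1)\}\le \alpha\rho'^k+\beta$ for all $k\in\mathbb{N}_0$.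
   Context: System: $x(k+1)=A(k)x(k)+w(k)$, $k\in\mathbb{N}_0$, $x(k)\in\mathbb{R}^n$, with $x(0)\sim\mathcal N(x_0,P_0)$ and $\{w(k)\}$ independent with $w(k)\sim\mathcal N(0,Q(k))$. Sensors $S_1,\dots,S_M$ measure $y_m(k)=C_mx(k)+v_m(k)$, $C_m\in\mathbb{R}^{l_m\times n}$, with $\{v_m(k)\}$ independent, $v_m(k)\sim\mathcal N(0,R_m(k))$, and the noises $w,v_1,\dots,v_M$ and $x(0)$ mutually independent. The sequences $\{A(k)\},\{Q(k)\},\{R_m(k)\}$ are deterministic, bounded and known at the gateway. $\|\cdot\|$ is the spectral norm. Network: a directed tree with vertices $S_0$ (the gateway, root), $S_1,\dots,S_M$; each $S_m$, $m\ge1$, has exactly one outgoing edge $\mathcal E_m=(S_m,\mathrm{parent}(S_m))$, and there is a unique path from $S_m$ to $S_0$, whose set of edges is denoted $\mathrm{edge}(\mathrm{path}(S_m))$. Network delays are neglected. Fading model: a network state process $\Xi(k)\in\mathbb{B}=\{1,\dots,|\mathbb{B}|\}$ (finite). Channel power gains $h_m(k)\ge0$ of links $\mathcal E_m$ have time-homogeneous conditional distributions given the network state, and for $(l,k)\neq(m,\ell)$, $h_l(k)$ and $h_m(\ell)$ are conditionally independent given $\Xi(k)=j,\Xi(\ell)=i$. Link success indicators $\gamma_m(k)\in\{0,1\}$ ($1$ iff transmission over $\mathcal E_m$ at time $k$ succeeds) satisfy $\Pr\{\gamma_m(k)=1\mid h_m(k)=h,u_m(k)=u,b_m(k)=b\}=f_m(hu,b)$,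 where $u_m(k)$ is the transmit power and $b_m(k)$ the bit-rate of $S_m$, and $f_m:\mathbb{R}_{\ge0}\times B\to[0,1]$ is increasing in its first and decreasing in its second argument. Under this model and the stated form of control laws, conditioned on the network states the link success variables $\gamma_m(k)$ are independent across $m$ and across time, with $\phi_{m|j}=\Pr\{\gamma_m(k)=1\mid\Xi(k)=j\}$ independent of $k$; the network, channel and dropout processes are independent of $x(0),w,v_m$. Estimator: $\theta_m(k)=\prod_{\mathcal E_i\in\mathrm{edge}(\mathrm{path}(S_m))}\gamma_i(k)$; $C(k)=[\theta_1(k)C_1;\dots;\theta_M(k)C_M]$ (stacked), $y(k)=[\theta_1(k)y_1(k);\dots;\theta_M(k)y_M(k)]$, $R(k)=\mathrm{diag}(R_1(k),\dots,R_M(k))$. The Kalman filter is $\hat x(k+1|k)=A(k)\hat x(k|k-1)+K(k)(y(k)-C(k)\hat x(k|k-1))$, $P(k+1|k)=A(k)P(k|k-1)A(k)^T+Q(k)-K(k)C(k)P(k|k-1)A(k)^T$, $K(k)=A(k)P(k|k-1)C(k)^T(C(k)P(k|k-1)C(k)^T+R(k))^{-1}$, with $P(0|-1)=P_0$, $\hat x(0|-1)=x_0$. Define $r(k)=1$ if $C(k)$ has full column rank and $r(k)=0$ otherwise. The Kalman filter is called exponentially bounded if there exist finite $\alpha,\beta$ and $\rho\in[0,1)$ with $\mathbf{E}\{\operatorname{tr}P(k|k-1)\}\le\alpha\rho^k+\beta$ for all $k\in\mathbb{N}_0$. *)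

theory Defs
  imports "HOL-Analysis.Analysis" "HOL-Probability.Probability"
begin

text \<open>Sensors are indexed by 1..M, the gateway by 0; par m is the head of the
 unique outgoing edge of sensor m.  The nodes (= edges E_i, identified with
 their tail S_i) on the path from S_m to the gateway S_0:\<close>
definition path_nodes :: "(nat \<Rightarrow> nat) \<Rightarrow> nat \<Rightarrow> nat set" where
  "path_nodes par m = {(par ^^ j) m | j. \<forall>j'\<le>j. (par ^^ j') m \<noteq> 0}"

definition is_tree :: "nat \<Rightarrow> (nat \<Rightarrow> nat) \<Rightarrow> bool" where
  "is_tree M par \<longleftrightarrow> (\<forall>m\<in>{1..M}. par m \<in> {0..M} \<and> (\<exists>j. (par ^^ j) m = 0))"

text \<open>theta_m given the set S of links E_i that succeed.\<close>
definition theta :: "(nat \<Rightarrow> nat) \<Rightarrow> nat set \<Rightarrow> nat \<Rightarrow> bool" where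
  "theta par S m \<longleftrightarrow> path_nodes par m \<subseteq> S"

text \<open>Stacked measurement matrix: Cfull stacks C_1;...;C_M, row r belonging to
 sensor sensor_of r; rows of sensor m are multiplied by theta_m.\<close>
definition stackedC :: "('l \<Rightarrow> nat) \<Rightarrow> (real^'n^'l) \<Rightarrow> (nat \<Rightarrow> bool) \<Rightarrow> real^'n^'l" where
  "stackedC sensor_of Cfull th = (\<chi> r. if th (sensor_of r) then Cfull $ r else 0)"

definition full_col_rank :: "real^'n^'l \<Rightarrow> bool" where
  "full_col_rank C \<longleftrightarrow> rank C = CARD('n)"

text \<open>Pr{r(k) = 0 | Xi(k) = j}: links succeed independently with probability
 phi m j given network state j.\<close>
definition prob_rank_def ::
  "nat \<Rightarrow> (nat \<Rightarrow> nat) \<Rightarrow> ('l \<Rightarrow> nat) \<Rightarrow> real^'n^'l \<Rightarrow> (nat \<Rightarrow> nat \<Rightarrow> real) \<Rightarrow> nat \<Rightarrow> real" where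
  "prob_rank_def M par sensor_of Cfull phi j =
     (\<Sum>S\<in>Pow {1..M}. (\<Prod>m\<in>{1..M}. if m \<in> S then phi m j else 1 - phi m j) *
        (if full_col_rank (stackedC sensor_of Cfull (theta par S)) then 0 else 1))"

definition nu ::
  "nat set \<Rightarrow> (nat \<Rightarrow> nat \<Rightarrow> real) \<Rightarrow> nat \<Rightarrow> (nat \<Rightarrow> nat) \<Rightarrow> ('l \<Rightarrow> nat) \<Rightarrow> real^'n^'l
     \<Rightarrow> (nat \<Rightarrow> nat \<Rightarrow> real) \<Rightarrow> nat \<Rightarrow> real" where
  "nu B p M par sensor_of Cfull phi i =
     (\<Sum>j\<in>B. p i j * prob_rank_def M par sensor_of Cfull phi j)"

text \<open>One step of the Riccati recursion P(k+1|k) from P(k|k-1).\<close>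
definition kf_step :: "real^'n^'n \<Rightarrow> real^'n^'n \<Rightarrow> real^'l^'l \<Rightarrow> real^'n^'l \<Rightarrow> real^'n^'n \<Rightarrow> real^'n^'n" where
  "kf_step A Q R C P =
     (let K = A ** P ** transpose C ** matrix_inv (C ** P ** transpose C + R)
      in A ** P ** transpose A + Q - K ** C ** P ** transpose A)"

fun kf_P :: "(nat \<Rightarrow> real^'n^'n) \<Rightarrow> (nat \<Rightarrow> real^'n^'n) \<Rightarrow> (nat \<Rightarrow> real^'l^'l) \<Rightarrow> (nat \<Rightarrow> real^'n^'l)
     \<Rightarrow> real^'n^'n \<Rightarrow> nat \<Rightarrow> real^'n^'n" where
  "kf_P A Q R C P0 0 = P0"
| "kf_P A Q R C P0 (Suc k) = kf_step (A k) (Q k) (R k) (C k) (kf_P A Q R C P0 k)"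

definition psd :: "real^'n^'n \<Rightarrow> bool" where
  "psd X \<longleftrightarrow> transpose X = X \<and> (\<forall>x. 0 \<le> x \<bullet> (X *v x))"

definition pd :: "real^'n^'n \<Rightarrow> bool" where
  "pd X \<longleftrightarrow> transpose X = X \<and> (\<forall>x. x \<noteq> 0 \<longrightarrow> 0 < x \<bullet> (X *v x))"

definition spec_norm :: "real^'n^'m \<Rightarrow> real" where
  "spec_norm X = onorm (\<lambda>x. X *v x)"

end

(* The pair (network state, set of successful links) is a finite Markov chain, and
   P(k+1|k) is a deterministic function of its path up to time k. One Riccati step
   multiplies the spectral norm of the covariance by at most |A(k)|^2 when C(k) lacks full
   column rank, and otherwise makes it uniformly bounded, since a left inverse of C(k)
   recovers the whole state. Averaging over the next letter given the current network state
   turns the hypothesis on nu into E|P(k+2|k+1)| <= rho E|P(k+1|k)| + c, which iterates to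
   the exponential bound; the trace is at most n times the spectral norm. *)

theory Submission
  imports Defs
begin

declare transpose_matrix_vector [simp del]

lemma inner_transpose_mv: "(transpose A *v x) \<bullet> y = x \<bullet> (A *v y)"
  for A :: "real^'n^'m"
  by (simp add: transpose_matrix_vector dot_lmul_matrix)

lemma symmetric_form_commute:
  "transpose X = X \<Longrightarrow> x \<bullet> (X *v y) = y \<bullet> (X *v x)"
  for X :: "real^'n^'n"
  by (metis inner_transpose_mv inner_commute)

lemma psd_cauchy_schwarz:
  fixes X :: "real^'n^'n"
  assumes "psd X"
  shows "(y \<bullet> (X *v x))\<^sup>2 \<le> (y \<bullet> (X *v y)) * (x \<bullet> (X *v x))"
proof -
  define a b c where "a = x \<bullet> (X *v x)" and "b = y \<bullet> (X *v x)" and "c = y \<bullet> (X *v y)"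
  have sym: "transpose X = X" and pos: "\<And>v. 0 \<le> v \<bullet> (X *v v)"
    using assms by (auto simp: psd_def)
  have quadratic: "0 \<le> a + 2 * t * b + t\<^sup>2 * c" for t
  proof -
    have "0 \<le> (x + t *\<^sub>R y) \<bullet> (X *v (x + t *\<^sub>R y))" by (rule pos)
    also have "\<dots> = a + t * (x \<bullet> (X *v y)) + t * b + t\<^sup>2 * c"
      by (simp add: a_def b_def c_def algebra_simps inner_add_left inner_add_right power2_eq_square)
    also have "x \<bullet> (X *v y) = b" unfolding b_def by (rule symmetric_form_commute[OF sym])
    finally show ?thesis by (simp add: algebra_simps)
  qed
  have "c \<ge> 0" unfolding c_def by (rule pos)
  show ?thesis
  proof (cases "c = 0")
    case True
    with quadratic[of "-(a + 1) / (2 * b)"] have "b = 0"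
      by (cases "b = 0") (simp_all add: field_simps)
    with True show ?thesis by (simp add: b_def c_def)
  next
    case False
    with \<open>c \<ge> 0\<close> have "c > 0" by simp
    have "0 \<le> a + 2 * (-b / c) * b + (-b / c)\<^sup>2 * c" by (rule quadratic)
    also have "\<dots> = a - b\<^sup>2 / c" using \<open>c > 0\<close> by (simp add: field_simps power2_eq_square)
    finally show ?thesis using \<open>c > 0\<close> by (simp add: a_def b_def c_def field_simps mult.commute)
  qed
qed

lemma spec_norm_nonneg: "0 \<le> spec_norm X"
  unfolding spec_norm_def by (rule onorm_pos_le) simp

lemma norm_mv_le_spec_norm: "norm (X *v x) \<le> spec_norm X * norm x"
  for X :: "real^'n^'m"
  unfolding spec_norm_def by (rule onorm) simp

lemma form_le_spec_norm: "x \<bullet> (X *v x) \<le> spec_norm X * (norm x)\<^sup>2"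
  for X :: "real^'n^'n"
proof -
  have "x \<bullet> (X *v x) \<le> norm x * norm (X *v x)" by (rule norm_cauchy_schwarz)
  also have "\<dots> \<le> norm x * (spec_norm X * norm x)"
    by (rule mult_left_mono[OF norm_mv_le_spec_norm]) simp
  finally show ?thesis by (simp add: power2_eq_square algebra_simps)
qed

lemma norm_transpose_mv_le_spec_norm: "norm (transpose X *v x) \<le> spec_norm X * norm x"
  for X :: "real^'n^'m"
proof -
  define z where "z = transpose X *v x"
  have "norm z * norm z = z \<bullet> z"
    by (simp add: power2_norm_eq_inner flip: power2_eq_square)
  also have "\<dots> = x \<bullet> (X *v z)"
    by (simp add: z_def inner_transpose_mv)
  also have "\<dots> \<le> norm x * norm (X *v z)" by (rule norm_cauchy_schwarz)
  also have "\<dots> \<le> (spec_norm X * norm x) * norm z"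
    using mult_left_mono[OF norm_mv_le_spec_norm[of X z], of "norm x"] by (simp add: mult_ac)
  finally have "norm z * norm z \<le> (spec_norm X * norm x) * norm z" .
  then show ?thesis
    by (cases "z = 0") (simp_all add: z_def spec_norm_nonneg)
qed

lemma spec_norm_le_if_psd_form_le:
  fixes X :: "real^'n^'n"
  assumes "psd X" "0 \<le> b" "\<And>x. x \<bullet> (X *v x) \<le> b * (norm x)\<^sup>2"
  shows "spec_norm X \<le> b"
  unfolding spec_norm_def
proof (rule onorm_le)
  fix x :: "real^'n"
  define z where "z = X *v x"
  define a where "a = (norm z)\<^sup>2"
  have pos: "0 \<le> v \<bullet> (X *v v)" for v using assms(1) by (simp add: psd_def)
  have "a\<^sup>2 \<le> (z \<bullet> (X *v z)) * (x \<bullet> (X *v x))"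
    using psd_cauchy_schwarz[OF assms(1), of z x] by (simp add: z_def a_def power2_norm_eq_inner)
  also have "\<dots> \<le> (b * (norm z)\<^sup>2) * (b * (norm x)\<^sup>2)"
    by (rule mult_mono[OF assms(3) assms(3)]) (simp_all add: assms(2) pos)
  also have "\<dots> = a * (b * norm x)\<^sup>2" by (simp add: a_def power2_eq_square mult_ac)
  finally have "a * a \<le> a * (b * norm x)\<^sup>2" by (simp add: power2_eq_square)
  moreover have "0 \<le> a" by (simp add: a_def)
  ultimately have "a \<le> (b * norm x)\<^sup>2"
    by (cases "a = 0") (auto simp: mult_le_cancel_left)
  then have "norm z \<le> b * norm x"
    unfolding a_def by (rule power2_le_imp_le) (simp add: assms(2))
  then show "norm (X *v x) \<le> b * norm x" by (simp add: z_def)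
qed

lemma diagonal_entry_eq_form: "X $ i $ i = axis i 1 \<bullet> (X *v axis i 1)"
  for X :: "real^'n^'n"
  by (simp add: inner_axis' matrix_vector_mul_component inner_axis)

lemma trace_le_spec_norm: "trace X \<le> real CARD('n) * spec_norm X"
  for X :: "real^'n^'n"
proof -
  have "X $ i $ i \<le> spec_norm X" for i
    using form_le_spec_norm[of "axis i 1" X] by (simp add: diagonal_entry_eq_form)
  then have "trace X \<le> (\<Sum>i\<in>(UNIV::'n set). spec_norm X)"
    unfolding trace_def by (rule sum_mono)
  then show ?thesis by simp
qed

lemma trace_nonneg_if_psd: "psd X \<Longrightarrow> 0 \<le> trace X"
  for X :: "real^'n^'n"
  unfolding trace_def psd_def by (auto intro: sum_nonneg simp: diagonal_entry_eq_form)

lemma transpose_add: "transpose (X + Y) = transpose X + transpose Y"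
  for X Y :: "real^'n^'m"
  by (simp add: transpose_def vec_eq_iff)

lemma transpose_diff: "transpose (X - Y) = transpose X - transpose Y"
  for X Y :: "real^'n^'m"
  by (simp add: transpose_def vec_eq_iff)

lemma matrix_inv_if_pd:
  fixes S :: "real^'n^'n"
  assumes "pd S"
  shows "S ** matrix_inv S = mat 1" and "matrix_inv S ** S = mat 1"
proof -
  have "inj ((*v) S)"
  proof (rule injI)
    fix x y assume "S *v x = S *v y"
    then have "(x - y) \<bullet> (S *v (x - y)) = 0" by (simp add: matrix_vector_mult_diff_distrib)
    then show "x = y" using assms unfolding pd_def by (metis less_irrefl right_minus_eq)
  qed
  then have "invertible S"
    by (simp add: matrix_left_invertible_injective invertible_left_inverse)
  then have "\<exists>S'. S ** S' = mat 1 \<and> S' ** S = mat 1" by (simp add: invertible_def)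
  then have "S ** matrix_inv S = mat 1 \<and> matrix_inv S ** S = mat 1"
    unfolding matrix_inv_def by (rule someI_ex)
  then show "S ** matrix_inv S = mat 1" and "matrix_inv S ** S = mat 1" by auto
qed

lemma symmetric_matrix_inv_if_pd:
  fixes S :: "real^'n^'n"
  assumes "pd S"
  shows "transpose (matrix_inv S) = matrix_inv S"
proof -
  have "transpose (matrix_inv S) ** S = mat 1"
    using arg_cong[OF matrix_inv_if_pd(1)[OF assms], of transpose] assms
    by (simp add: matrix_transpose_mul pd_def)
  then have "transpose (matrix_inv S) ** S ** matrix_inv S = matrix_inv S" by simp
  then show ?thesis by (simp add: matrix_inv_if_pd[OF assms] flip: matrix_mul_assoc)
qed

definition innovation_cov :: "real^'n^'l \<Rightarrow> real^'n^'n \<Rightarrow> real^'l^'l \<Rightarrow> real^'l^'l" where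
  "innovation_cov C P R = C ** P ** transpose C + R"

definition gain_form :: "real^'n^'l \<Rightarrow> real^'n^'n \<Rightarrow> real^'l^'l \<Rightarrow> real^'n \<Rightarrow> real" where
  "gain_form C P R y = (C *v (P *v y)) \<bullet> (matrix_inv (innovation_cov C P R) *v (C *v (P *v y)))"

lemma innovation_cov_form:
  "v \<bullet> (innovation_cov C P R *v v) = (transpose C *v v) \<bullet> (P *v (transpose C *v v)) + v \<bullet> (R *v v)"
  by (simp add: innovation_cov_def matrix_vector_mult_add_rdistrib matrix_vector_mul_assoc
      inner_add_right inner_transpose_mv flip: matrix_mul_assoc)

lemma pd_innovation_cov:
  assumes "psd P" "pd R"
  shows "pd (innovation_cov C P R)"
  using assms innovation_cov_form[of _ C P R]
  by (fastforce simp: pd_def psd_def innovation_cov_def transpose_add matrix_transpose_mul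
      matrix_mul_assoc intro: add_nonneg_pos)

lemma kf_step_mv:
  "kf_step A Q R C P *v x = A *v (P *v (transpose A *v x)) + Q *v x
     - A *v (P *v (transpose C *v (matrix_inv (innovation_cov C P R) *v (C *v (P *v (transpose A *v x))))))"
  unfolding kf_step_def Let_def innovation_cov_def
  by (simp add: matrix_vector_mult_add_rdistrib matrix_vector_mult_diff_rdistrib
      matrix_vector_mul_assoc matrix_mul_assoc)

lemma kf_step_form:
  assumes "transpose P = P"
  shows "x \<bullet> (kf_step A Q R C P *v x)
    = (transpose A *v x) \<bullet> (P *v (transpose A *v x)) - gain_form C P R (transpose A *v x) + x \<bullet> (Q *v x)"
proof -
  define y where "y = transpose A *v x"
  define z where "z = matrix_inv (innovation_cov C P R) *v (C *v (P *v y))"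
  have "x \<bullet> (kf_step A Q R C P *v x) = y \<bullet> (P *v y) + x \<bullet> (Q *v x) - y \<bullet> (P *v (transpose C *v z))"
    by (simp add: kf_step_mv inner_add_right inner_diff_right inner_transpose_mv y_def z_def)
  also have "y \<bullet> (P *v (transpose C *v z)) = (transpose C *v z) \<bullet> (P *v y)"
    by (rule symmetric_form_commute[OF assms])
  also have "\<dots> = gain_form C P R y"
    unfolding gain_form_def z_def inner_transpose_mv by (rule inner_commute)
  finally show ?thesis by (simp add: y_def)
qed

lemma innovation_cov_matrix_inv_mv:
  "psd P \<Longrightarrow> pd R \<Longrightarrow> innovation_cov C P R *v (matrix_inv (innovation_cov C P R) *v u) = u"
  by (simp add: matrix_vector_mul_assoc matrix_inv_if_pd pd_innovation_cov)

lemma gain_form_nonneg: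
  assumes "psd P" "pd R"
  shows "0 \<le> gain_form C P R y"
proof -
  define z where "z = matrix_inv (innovation_cov C P R) *v (C *v (P *v y))"
  have "gain_form C P R y = z \<bullet> (innovation_cov C P R *v z)"
    by (simp add: gain_form_def z_def innovation_cov_matrix_inv_mv[OF assms] inner_commute)
  also have "\<dots> \<ge> 0"
    using pd_innovation_cov[OF assms, of C] by (cases "z = 0") (auto simp: pd_def)
  finally show ?thesis .
qed

lemma gain_form_le:
  assumes "psd P" "pd R"
  shows "gain_form C P R y \<le> y \<bullet> (P *v y)"
proof -
  define z where "z = matrix_inv (innovation_cov C P R) *v (C *v (P *v y))"
  have Psym: "transpose P = P" and Ppos: "\<And>v. 0 \<le> v \<bullet> (P *v v)"
    using assms(1) by (auto simp: psd_def)
  have Rpos: "0 \<le> v \<bullet> (R *v v)" for v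
    using assms(2) by (cases "v = 0") (auto simp: pd_def)
  have cross: "(transpose C *v z) \<bullet> (P *v y) = gain_form C P R y"
    unfolding gain_form_def z_def inner_transpose_mv by (rule inner_commute)
  have "0 \<le> (y - transpose C *v z) \<bullet> (P *v (y - transpose C *v z)) + z \<bullet> (R *v z)"
    using Ppos Rpos by (rule add_nonneg_nonneg)
  also have "\<dots> = y \<bullet> (P *v y) - 2 * gain_form C P R y + z \<bullet> (innovation_cov C P R *v z)"
    using symmetric_form_commute[OF Psym, of y "transpose C *v z"]
    by (simp add: innovation_cov_form matrix_vector_mult_diff_distrib inner_diff_left
        inner_diff_right cross)
  also have "z \<bullet> (innovation_cov C P R *v z) = gain_form C P R y"
    by (simp add: gain_form_def z_def innovation_cov_matrix_inv_mv[OF assms] inner_commute)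
  finally show ?thesis by simp
qed

lemma gain_form_ge:
  assumes "psd P" "pd R" "transpose C *v w = y"
  shows "y \<bullet> (P *v y) - w \<bullet> (R *v w) \<le> gain_form C P R y"
proof -
  define S where "S = innovation_cov C P R"
  define u where "u = C *v (P *v y)"
  define z where "z = matrix_inv S *v u"
  have Spd: "pd S" unfolding S_def by (rule pd_innovation_cov[OF assms(1,2)])
  then have Ssym: "transpose S = S" by (simp add: pd_def)
  have Spos: "0 \<le> v \<bullet> (S *v v)" for v
    using Spd by (cases "v = 0") (auto simp: pd_def)
  have Sz: "S *v z = u"
    by (simp add: S_def z_def innovation_cov_matrix_inv_mv[OF assms(1,2)])
  have "0 \<le> (w - z) \<bullet> (S *v (w - z))" by (rule Spos)
  also have "\<dots> = w \<bullet> (S *v w) - 2 * (w \<bullet> u) + z \<bullet> u"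
    using symmetric_form_commute[OF Ssym, of z w]
    by (simp add: matrix_vector_mult_diff_distrib inner_diff_left inner_diff_right Sz inner_commute[of u z])
  also have "w \<bullet> (S *v w) = y \<bullet> (P *v y) + w \<bullet> (R *v w)"
    by (simp add: S_def innovation_cov_form assms(3))
  also have "w \<bullet> u = y \<bullet> (P *v y)"
    by (simp add: u_def assms(3) flip: inner_transpose_mv)
  also have "z \<bullet> u = gain_form C P R y"
    by (simp add: gain_form_def u_def z_def S_def inner_commute)
  finally show ?thesis by simp
qed

lemma symmetric_kf_step:
  assumes "psd P" "psd Q" "pd R"
  shows "transpose (kf_step A Q R C P) = kf_step A Q R C P"
proof -
  have "transpose P = P" "transpose Q = Q" using assms(1,2) by (simp_all add: psd_def)
  moreover have "transpose (matrix_inv (C ** P ** transpose C + R)) = matrix_inv (C ** P ** transpose C + R)"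
    using symmetric_matrix_inv_if_pd[OF pd_innovation_cov[OF assms(1,3)]] by (simp add: innovation_cov_def)
  ultimately show ?thesis
    by (simp add: kf_step_def Let_def transpose_add transpose_diff matrix_transpose_mul matrix_mul_assoc)
qed

lemma psd_kf_step:
  assumes "psd P" "psd Q" "pd R"
  shows "psd (kf_step A Q R C P)"
  unfolding psd_def
proof (intro conjI allI)
  show "transpose (kf_step A Q R C P) = kf_step A Q R C P"
    by (rule symmetric_kf_step[OF assms])
  fix x
  have "0 \<le> (transpose A *v x) \<bullet> (P *v (transpose A *v x)) - gain_form C P R (transpose A *v x)"
    using gain_form_le[OF assms(1,3)] by simp
  moreover have "0 \<le> x \<bullet> (Q *v x)" using assms(2) by (simp add: psd_def)
  ultimately show "0 \<le> x \<bullet> (kf_step A Q R C P *v x)"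
    using assms(1) by (simp add: kf_step_form psd_def)
qed

lemma spec_norm_kf_step_le:
  fixes A :: "real^'n^'n"
  assumes "psd P" "psd Q" "pd R"
  shows "spec_norm (kf_step A Q R C P) \<le> (spec_norm A)\<^sup>2 * spec_norm P + spec_norm Q"
proof (rule spec_norm_le_if_psd_form_le[OF psd_kf_step[OF assms]])
  show "0 \<le> (spec_norm A)\<^sup>2 * spec_norm P + spec_norm Q" by (simp add: spec_norm_nonneg)
  fix x :: "real^'n"
  define y where "y = transpose A *v x"
  have "x \<bullet> (kf_step A Q R C P *v x) \<le> y \<bullet> (P *v y) + x \<bullet> (Q *v x)"
    using assms gain_form_nonneg[OF assms(1,3), of C y] by (simp add: kf_step_form psd_def y_def)
  also have "\<dots> \<le> spec_norm P * (norm y)\<^sup>2 + spec_norm Q * (norm x)\<^sup>2"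
    by (intro add_mono form_le_spec_norm)
  also have "spec_norm P * (norm y)\<^sup>2 \<le> spec_norm P * (spec_norm A * norm x)\<^sup>2"
    unfolding y_def
    by (intro mult_left_mono power_mono norm_transpose_mv_le_spec_norm) (simp_all add: spec_norm_nonneg)
  finally show "x \<bullet> (kf_step A Q R C P *v x) \<le> ((spec_norm A)\<^sup>2 * spec_norm P + spec_norm Q) * (norm x)\<^sup>2"
    by (simp add: algebra_simps power_mult_distrib)
qed

text \<open>A left inverse of \<open>C\<close> means the whole state is observed, so the prior covariance
  \<open>P\<close> is forgotten.\<close>

lemma spec_norm_kf_step_le_left_inverse:
  fixes A :: "real^'n^'n"
  assumes "psd P" "psd Q" "pd R" "L ** C = mat 1"
  shows "spec_norm (kf_step A Q R C P) \<le> (spec_norm A)\<^sup>2 * (spec_norm L)\<^sup>2 * spec_norm R + spec_norm Q"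
proof (rule spec_norm_le_if_psd_form_le[OF psd_kf_step[OF assms(1-3)]])
  show "0 \<le> (spec_norm A)\<^sup>2 * (spec_norm L)\<^sup>2 * spec_norm R + spec_norm Q"
    by (simp add: spec_norm_nonneg)
  fix x :: "real^'n"
  define y where "y = transpose A *v x"
  define w where "w = transpose L *v y"
  have "transpose C ** transpose L = mat 1"
    using arg_cong[OF assms(4), of transpose] by (simp add: matrix_transpose_mul)
  then have "transpose C *v w = y" by (simp add: w_def matrix_vector_mul_assoc)
  from gain_form_ge[OF assms(1,3) this] have "y \<bullet> (P *v y) - gain_form C P R y \<le> w \<bullet> (R *v w)"
    by simp
  then have "x \<bullet> (kf_step A Q R C P *v x) \<le> w \<bullet> (R *v w) + x \<bullet> (Q *v x)"
    using assms(1) by (simp add: kf_step_form psd_def y_def)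
  also have "\<dots> \<le> spec_norm R * (norm w)\<^sup>2 + spec_norm Q * (norm x)\<^sup>2"
    by (intro add_mono form_le_spec_norm)
  also have "norm w \<le> spec_norm L * (spec_norm A * norm x)"
    unfolding w_def y_def
    by (rule order_trans[OF norm_transpose_mv_le_spec_norm])
      (intro mult_left_mono norm_transpose_mv_le_spec_norm spec_norm_nonneg)
  then have "spec_norm R * (norm w)\<^sup>2 \<le> spec_norm R * (spec_norm L * (spec_norm A * norm x))\<^sup>2"
    by (intro mult_left_mono power_mono) (simp_all add: spec_norm_nonneg)
  finally show "x \<bullet> (kf_step A Q R C P *v x) \<le> ((spec_norm A)\<^sup>2 * (spec_norm L)\<^sup>2 * spec_norm R + spec_norm Q) * (norm x)\<^sup>2"
    by (simp add: algebra_simps power_mult_distrib)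
qed

lemma left_inverse_if_full_col_rank:
  fixes C :: "real^'n^'l"
  assumes "full_col_rank C"
  obtains L where "L ** C = mat 1"
  using assms by (metis full_col_rank_def full_rank_injective matrix_left_invertible_injective)

lemma kf_step_norm_le_uniform:
  fixes A Q :: "nat \<Rightarrow> real^'n^'n" and R :: "nat \<Rightarrow> real^'l^'l" and Cs :: "(real^'n^'l) set"
  assumes "finite Cs"
    and norms: "\<And>k. spec_norm (A k) \<le> c \<and> spec_norm (Q k) \<le> c \<and> spec_norm (R k) \<le> c"
    and cov: "\<And>k. psd (Q k)" "\<And>k. pd (R k)"
  obtains c' where "0 \<le> c'"
    and "\<And>k C P. C \<in> Cs \<Longrightarrow> psd P \<Longrightarrow> spec_norm (kf_step (A k) (Q k) (R k) C P)
           \<le> (spec_norm (A k))\<^sup>2 * (if full_col_rank C then 0 else 1) * spec_norm P + c'"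
proof -
  define L where "L C = (SOME L. L ** C = mat 1)" for C :: "real^'n^'l"
  have L: "L C ** C = mat 1" if "full_col_rank C" for C
    unfolding L_def by (rule someI_ex) (meson left_inverse_if_full_col_rank that)
  define K where "K = (\<Sum>C\<in>Cs. (spec_norm (L C))\<^sup>2)"
  have K: "(spec_norm (L C))\<^sup>2 \<le> K" if "C \<in> Cs" for C
    unfolding K_def by (intro member_le_sum that) (simp_all add: \<open>finite Cs\<close>)
  have "0 \<le> c" using norms[of 0] spec_norm_nonneg[of "A 0"] by linarith
  have "0 \<le> K" unfolding K_def by (simp add: sum_nonneg)
  have "spec_norm (kf_step (A k) (Q k) (R k) C P)
      \<le> (spec_norm (A k))\<^sup>2 * (if full_col_rank C then 0 else 1) * spec_norm P + (c\<^sup>2 * K * c + c)"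
    if "C \<in> Cs" "psd P" for k C P
  proof (cases "full_col_rank C")
    case True
    have "(spec_norm (A k))\<^sup>2 * (spec_norm (L C))\<^sup>2 * spec_norm (R k) \<le> c\<^sup>2 * K * c"
      using norms[of k] K[OF \<open>C \<in> Cs\<close>] \<open>0 \<le> c\<close> \<open>0 \<le> K\<close>
      by (intro mult_mono power_mono) (simp_all add: spec_norm_nonneg)
    with spec_norm_kf_step_le_left_inverse[OF \<open>psd P\<close> cov(1)[of k] cov(2)[of k] L[OF True],
        where A = "A k"] norms[of k] True
    show ?thesis by simp
  next
    case False
    have "0 \<le> c\<^sup>2 * K * c" using \<open>0 \<le> c\<close> \<open>0 \<le> K\<close> by simp
    with spec_norm_kf_step_le[OF \<open>psd P\<close> cov(1)[of k] cov(2)[of k], where A = "A k" and C = C]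
      norms[of k] False
    show ?thesis by simp
  qed
  moreover have "0 \<le> c\<^sup>2 * K * c + c" using \<open>0 \<le> c\<close> \<open>0 \<le> K\<close> by simp
  ultimately show ?thesis using that by blast
qed

definition kf_run :: "(nat \<Rightarrow> real^'n^'n) \<Rightarrow> (nat \<Rightarrow> real^'n^'n) \<Rightarrow> (nat \<Rightarrow> real^'l^'l)
    \<Rightarrow> ('a \<Rightarrow> real^'n^'l) \<Rightarrow> real^'n^'n \<Rightarrow> 'a list \<Rightarrow> real^'n^'n" where
  "kf_run A Q R C P0 v = kf_P A Q R (\<lambda>t. C (v ! t)) P0 (length v)"

lemma kf_P_cong: "(\<And>t. t < k \<Longrightarrow> C t = C' t) \<Longrightarrow> kf_P A Q R C P0 k = kf_P A Q R C' P0 k"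
  by (induction k) auto

lemma kf_run_snoc:
  "kf_run A Q R C P0 (v @ [y])
     = kf_step (A (length v)) (Q (length v)) (R (length v)) (C y) (kf_run A Q R C P0 v)"
proof -
  have "kf_P A Q R (\<lambda>t. C ((v @ [y]) ! t)) P0 (length v) = kf_run A Q R C P0 v"
    unfolding kf_run_def by (rule kf_P_cong) (simp add: nth_append)
  then show ?thesis by (simp add: kf_run_def)
qed

lemma psd_kf_P:
  assumes "\<And>k. psd (Q k)" "psd P0" "\<And>k. pd (R k)"
  shows "psd (kf_P A Q R C P0 k)"
  by (induction k) (simp_all add: assms psd_kf_step)

locale finite_markov_chain =
  fixes X :: "'a set" and init :: "'a \<Rightarrow> real" and trans :: "'a \<Rightarrow> 'a \<Rightarrow> real"
  assumes finite_states: "finite X"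
    and init_nonneg: "x \<in> X \<Longrightarrow> 0 \<le> init x"
    and sum_init: "(\<Sum>x\<in>X. init x) = 1"
    and trans_nonneg: "x \<in> X \<Longrightarrow> y \<in> X \<Longrightarrow> 0 \<le> trans x y"
    and sum_trans: "x \<in> X \<Longrightarrow> (\<Sum>y\<in>X. trans x y) = 1"
begin

definition paths :: "nat \<Rightarrow> 'a list set" where
  "paths n = {v. length v = Suc n \<and> set v \<subseteq> X}"

definition path_prob :: "'a list \<Rightarrow> real" where
  "path_prob v = init (hd v) * (\<Prod>k<length v - 1. trans (v ! k) (v ! Suc k))"

lemma finite_paths: "finite (paths n)"
proof -
  have "finite {v. set v \<subseteq> X \<and> length v = Suc n}"
    using finite_states by (rule finite_lists_length_eq)
  then show ?thesis by (simp add: paths_def conj_commute)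
qed

lemma paths_nonempty: "v \<in> paths n \<Longrightarrow> v \<noteq> []"
  by (auto simp: paths_def)

lemma nth_path_in_states: "v \<in> paths n \<Longrightarrow> k \<le> n \<Longrightarrow> v ! k \<in> X"
  by (auto simp: paths_def)

lemma last_path_in_states: "v \<in> paths n \<Longrightarrow> last v \<in> X"
  using last_in_set[OF paths_nonempty] by (auto simp: paths_def)

lemma paths_0: "paths 0 = (\<lambda>x. [x]) ` X"
  by (auto simp: paths_def length_Suc_conv)

lemma paths_Suc: "paths (Suc n) = (\<lambda>(v, y). v @ [y]) ` (paths n \<times> X)"
proof (intro equalityI subsetI)
  fix v assume v: "v \<in> paths (Suc n)"
  then have "v \<noteq> []" by (auto simp: paths_def)
  then have "v = butlast v @ [last v]" by simp
  moreover have "(butlast v, last v) \<in> paths n \<times> X"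
    using v \<open>v \<noteq> []\<close> by (auto simp: paths_def dest: in_set_butlastD)
  ultimately show "v \<in> (\<lambda>(v, y). v @ [y]) ` (paths n \<times> X)" by force
qed (auto simp: paths_def)

lemma sum_paths_Suc:
  "(\<Sum>v\<in>paths (Suc n). f v) = (\<Sum>v\<in>paths n. \<Sum>y\<in>X. f (v @ [y]))"
proof -
  have "inj_on (\<lambda>(v, y). v @ [y]) (paths n \<times> X)" by (auto simp: inj_on_def)
  then have "(\<Sum>v\<in>paths (Suc n). f v) = (\<Sum>(v, y)\<in>paths n \<times> X. f (v @ [y]))"
    unfolding paths_Suc by (subst sum.reindex) (simp_all add: comp_def case_prod_beta)
  then show ?thesis by (simp add: sum.cartesian_product)
qed

lemma path_prob_singleton: "path_prob [x] = init x"
  by (simp add: path_prob_def)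

lemma path_prob_snoc:
  assumes "v \<noteq> []"
  shows "path_prob (v @ [y]) = path_prob v * trans (last v) y"
proof -
  define n where "n = length v - 1"
  have len: "length v = Suc n" using assms by (simp add: n_def)
  have "(\<Prod>k<n. trans ((v @ [y]) ! k) ((v @ [y]) ! Suc k)) = (\<Prod>k<n. trans (v ! k) (v ! Suc k))"
    by (intro prod.cong refl) (simp add: nth_append len)
  moreover have "(v @ [y]) ! n = last v" "(v @ [y]) ! Suc n = y"
    using assms by (simp_all add: nth_append len last_conv_nth)
  ultimately show ?thesis
    using assms by (simp add: path_prob_def len prod.lessThan_Suc mult_ac)
qed

lemma path_prob_nonneg: "v \<in> paths n \<Longrightarrow> 0 \<le> path_prob v"
  unfolding path_prob_def paths_def
  by (force intro!: mult_nonneg_nonneg prod_nonneg init_nonneg trans_nonneg nth_mem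
      intro: hd_in_set)

lemma sum_path_prob: "(\<Sum>v\<in>paths n. path_prob v) = 1"
proof (induction n)
  case 0
  then show ?case
    by (subst paths_0, subst sum.reindex) (auto simp: inj_on_def path_prob_singleton sum_init)
next
  case (Suc n)
  have "(\<Sum>v\<in>paths (Suc n). path_prob v) = (\<Sum>v\<in>paths n. path_prob v * (\<Sum>y\<in>X. trans (last v) y))"
    unfolding sum_paths_Suc sum_distrib_left
    by (intro sum.cong refl) (simp add: path_prob_snoc paths_nonempty)
  also have "\<dots> = (\<Sum>v\<in>paths n. path_prob v)"
    by (intro sum.cong refl) (simp add: sum_trans last_path_in_states)
  finally show ?case using Suc by simp
qed

lemma expectation_paths_Suc_le:
  assumes step: "\<And>v y. v \<in> paths n \<Longrightarrow> y \<in> X \<Longrightarrow> f (v @ [y]) \<le> b y * f v + c"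
    and nonneg: "\<And>v. v \<in> paths n \<Longrightarrow> 0 \<le> f v"
    and mean: "\<And>x. x \<in> X \<Longrightarrow> (\<Sum>y\<in>X. trans x y * b y) \<le> \<rho>"
  shows "(\<Sum>v\<in>paths (Suc n). path_prob v * f v) \<le> \<rho> * (\<Sum>v\<in>paths n. path_prob v * f v) + c"
proof -
  have "(\<Sum>v\<in>paths (Suc n). path_prob v * f v)
      = (\<Sum>v\<in>paths n. \<Sum>y\<in>X. path_prob v * trans (last v) y * f (v @ [y]))"
    unfolding sum_paths_Suc by (intro sum.cong refl) (simp add: path_prob_snoc paths_nonempty)
  also have "\<dots> \<le> (\<Sum>v\<in>paths n. \<Sum>y\<in>X. path_prob v * trans (last v) y * (b y * f v + c))"
    by (intro sum_mono mult_left_mono step mult_nonneg_nonneg path_prob_nonneg trans_nonneg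
        last_path_in_states)
  also have "\<dots> = (\<Sum>v\<in>paths n. path_prob v * (f v * (\<Sum>y\<in>X. trans (last v) y * b y) + c))"
  proof (rule sum.cong[OF refl])
    fix v assume "v \<in> paths n"
    have "(\<Sum>y\<in>X. path_prob v * trans (last v) y * (b y * f v + c))
        = path_prob v * (f v * (\<Sum>y\<in>X. trans (last v) y * b y) + c * (\<Sum>y\<in>X. trans (last v) y))"
      by (simp add: sum.distrib sum_distrib_left algebra_simps)
    then show "(\<Sum>y\<in>X. path_prob v * trans (last v) y * (b y * f v + c))
        = path_prob v * (f v * (\<Sum>y\<in>X. trans (last v) y * b y) + c)"
      by (simp add: sum_trans last_path_in_states[OF \<open>v \<in> paths n\<close>])
  qed
  also have "\<dots> \<le> (\<Sum>v\<in>paths n. path_prob v * (\<rho> * f v + c))"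
    using mult_left_mono[OF mean[OF last_path_in_states] nonneg]
    by (intro sum_mono mult_left_mono add_right_mono path_prob_nonneg) (simp_all add: mult.commute)
  also have "\<dots> = \<rho> * (\<Sum>v\<in>paths n. path_prob v * f v) + c"
    by (simp add: algebra_simps sum.distrib sum_distrib_left sum_path_prob flip: sum_distrib_left)
  finally show ?thesis .
qed

end

lemma affine_recursion_bound:
  fixes E :: "nat \<Rightarrow> real"
  assumes "0 \<le> \<rho>" "\<rho> < 1" "0 \<le> c" "\<And>n. E (Suc n) \<le> \<rho> * E n + c"
  shows "E n \<le> \<rho> ^ n * E 0 + c / (1 - \<rho>)"
proof (induction n)
  case 0
  then show ?case using assms(2,3) by simp
next
  case (Suc n)
  have "E (Suc n) \<le> \<rho> * (\<rho> ^ n * E 0 + c / (1 - \<rho>)) + c"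
    using assms(4)[of n] mult_left_mono[OF Suc assms(1)] by linarith
  also have "\<dots> = \<rho> ^ Suc n * E 0 + c / (1 - \<rho>)"
    using assms(2) by (simp add: field_simps)
  finally show ?case .
qed

text \<open>Any \<open>\<rho>' \<in> (\<rho>, 1)\<close> absorbs the index shift; \<open>\<rho>' > 0\<close> is what allows dividing by it.\<close>

lemma exponential_bound_if_shifted_bound:
  fixes g :: "nat \<Rightarrow> real"
  assumes "0 \<le> a" "0 \<le> \<rho>" "\<rho> < 1" "\<And>n. g (Suc n) \<le> a * \<rho> ^ n + b"
  shows "\<exists>\<alpha> \<beta> \<rho>'. 0 \<le> \<rho>' \<and> \<rho>' < 1 \<and> (\<forall>k. g k \<le> \<alpha> * \<rho>' ^ k + \<beta>)"
proof (intro exI conjI allI)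
  define \<rho>' where "\<rho>' = (1 + \<rho>) / 2"
  have \<rho>': "0 < \<rho>'" "\<rho>' < 1" "\<rho> \<le> \<rho>'" using assms(2,3) by (simp_all add: \<rho>'_def)
  show "0 \<le> \<rho>'" "\<rho>' < 1" using \<rho>' by simp_all
  fix k
  show "g k \<le> (\<bar>g 0\<bar> + a / \<rho>') * \<rho>' ^ k + \<bar>b\<bar>"
  proof (cases k)
    case 0
    have "0 \<le> a / \<rho>'" using \<rho>'(1) assms(1) by simp
    with 0 show ?thesis by (simp add: add_increasing2)
  next
    case (Suc n)
    have "g k \<le> a * \<rho>' ^ n + b"
      using assms(4)[of n] mult_left_mono[OF power_mono[OF \<rho>'(3) assms(2)] assms(1), of n] Suc
      by simp
    also have "a * \<rho>' ^ n = a / \<rho>' * \<rho>' ^ k" using \<rho>'(1) Suc by simp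
    also have "\<dots> \<le> (\<bar>g 0\<bar> + a / \<rho>') * \<rho>' ^ k" using \<rho>'(1) by (intro mult_right_mono) simp_all
    finally show ?thesis by simp
  qed
qed

text \<open>\<open>f\<close> is not assumed measurable, hence only an inequality: a non-integrable \<open>f\<close> has
  integral \<open>0\<close>.\<close>

lemma integral_le_sum_if_finite_valued:
  fixes \<Phi> :: "'w \<Rightarrow> 'a" and f :: "'w \<Rightarrow> real"
  assumes "prob_space \<Omega>" "finite V"
    and sets: "\<And>v. v \<in> V \<Longrightarrow> {\<omega>\<in>space \<Omega>. \<Phi> \<omega> = v} \<in> sets \<Omega>"
    and total: "(\<Sum>v\<in>V. measure \<Omega> {\<omega>\<in>space \<Omega>. \<Phi> \<omega> = v}) = 1"
    and f: "\<And>\<omega>. \<omega> \<in> space \<Omega> \<Longrightarrow> f \<omega> = h (\<Phi> \<omega>)"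
    and nonneg: "0 \<le> (\<Sum>v\<in>V. measure \<Omega> {\<omega>\<in>space \<Omega>. \<Phi> \<omega> = v} * h v)"
  shows "integral\<^sup>L \<Omega> f \<le> (\<Sum>v\<in>V. measure \<Omega> {\<omega>\<in>space \<Omega>. \<Phi> \<omega> = v} * h v)"
proof -
  interpret prob_space \<Omega> by (rule assms(1))
  define cyl where "cyl v = {\<omega>\<in>space \<Omega>. \<Phi> \<omega> = v}" for v
  define g where "g \<omega> = (\<Sum>v\<in>V. indicator (cyl v) \<omega> *\<^sub>R h v)" for \<omega>
  have g: "has_bochner_integral \<Omega> g (\<Sum>v\<in>V. measure \<Omega> (cyl v) *\<^sub>R h v)"
    unfolding g_def using sets
    by (intro has_bochner_integral_sum has_bochner_integral_indicator)
      (auto simp: cyl_def less_top[symmetric])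
  have "measure \<Omega> (\<Union>v\<in>V. cyl v) = (\<Sum>v\<in>V. measure \<Omega> (cyl v))"
    using \<open>finite V\<close> sets
    by (intro finite_measure_finite_Union) (auto simp: disjoint_family_on_def cyl_def)
  then have "AE \<omega> in \<Omega>. \<omega> \<in> (\<Union>v\<in>V. cyl v)"
    using total by (intro AE_prob_1) (simp add: cyl_def)
  then have "AE \<omega> in \<Omega>. f \<omega> = g \<omega>"
  proof (rule AE_mp, intro AE_I2 impI)
    fix \<omega> assume "\<omega> \<in> space \<Omega>" "\<omega> \<in> (\<Union>v\<in>V. cyl v)"
    then have "\<Phi> \<omega> \<in> V" by (auto simp: cyl_def)
    have "g \<omega> = (\<Sum>v\<in>V. if v = \<Phi> \<omega> then h v else 0)"
      unfolding g_def by (intro sum.cong refl) (auto simp: cyl_def indicator_def \<open>\<omega> \<in> space \<Omega>\<close>)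
    with \<open>finite V\<close> \<open>\<Phi> \<omega> \<in> V\<close> f[OF \<open>\<omega> \<in> space \<Omega>\<close>] show "f \<omega> = g \<omega>" by simp
  qed
  show ?thesis
  proof (cases "integrable \<Omega> f")
    case True
    then have "integral\<^sup>L \<Omega> f = integral\<^sup>L \<Omega> g"
      using \<open>AE \<omega> in \<Omega>. f \<omega> = g \<omega>\<close> g
      by (intro integral_cong_AE) (auto dest: borel_measurable_has_bochner_integral)
    with g show ?thesis by (simp add: has_bochner_integral_integral_eq cyl_def)
  next
    case False
    with nonneg show ?thesis by (simp add: not_integrable_integral_eq)
  qed
qed

definition link_prob :: "nat \<Rightarrow> (nat \<Rightarrow> nat \<Rightarrow> real) \<Rightarrow> nat \<Rightarrow> nat set \<Rightarrow> real" where
  "link_prob M phi j S = (\<Prod>m\<in>{1..M}. if m \<in> S then phi m j else 1 - phi m j)"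

lemma sum_link_prob: "(\<Sum>S\<in>Pow {1..M}. link_prob M phi j S) = 1"
proof -
  have "(\<Sum>S\<in>Pow {1..M}. link_prob M phi j S)
      = (\<Sum>S\<in>Pow {1..M}. (\<Prod>m\<in>S. phi m j) * (\<Prod>m\<in>{1..M} - S. 1 - phi m j))"
  proof (rule sum.cong[OF refl])
    fix S assume "S \<in> Pow {1..M}"
    then have "{1..M} \<inter> {m. m \<in> S} = S" "{1..M} \<inter> - {m. m \<in> S} = {1..M} - S" by auto
    then show "link_prob M phi j S = (\<Prod>m\<in>S. phi m j) * (\<Prod>m\<in>{1..M} - S. 1 - phi m j)"
      unfolding link_prob_def by (simp add: prod.If_cases)
  qed
  also have "\<dots> = (\<Prod>m\<in>{1..M}. phi m j + (1 - phi m j))"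
    by (rule prod_add[symmetric]) simp
  finally show ?thesis by simp
qed

lemma link_prob_nonneg:
  "(\<And>m. m \<in> {1..M} \<Longrightarrow> 0 \<le> phi m j \<and> phi m j \<le> 1) \<Longrightarrow> 0 \<le> link_prob M phi j S"
  unfolding link_prob_def by (intro prod_nonneg) auto

locale link_network =
  fixes \<Omega> :: "'w measure" and nB M :: nat
    and pi0 :: "nat \<Rightarrow> real" and p phi :: "nat \<Rightarrow> nat \<Rightarrow> real"
    and Xi :: "nat \<Rightarrow> 'w \<Rightarrow> nat" and gamma :: "nat \<Rightarrow> nat \<Rightarrow> 'w \<Rightarrow> bool"
  assumes prob_space: "prob_space \<Omega>"
    and p_nonneg: "\<And>i j. i \<in> {1..nB} \<Longrightarrow> j \<in> {1..nB} \<Longrightarrow> 0 \<le> p i j"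
    and sum_p: "\<And>i. i \<in> {1..nB} \<Longrightarrow> (\<Sum>j\<in>{1..nB}. p i j) = 1"
    and pi0_nonneg: "\<And>i. i \<in> {1..nB} \<Longrightarrow> 0 \<le> pi0 i"
    and sum_pi0: "(\<Sum>i\<in>{1..nB}. pi0 i) = 1"
    and phi_prob: "\<And>m j. m \<in> {1..M} \<Longrightarrow> j \<in> {1..nB} \<Longrightarrow> 0 \<le> phi m j \<and> phi m j \<le> 1"
    and Xi_measurable: "\<And>k. Xi k \<in> measurable \<Omega> (count_space UNIV)"
    and gamma_measurable: "\<And>m k. gamma m k \<in> measurable \<Omega> (count_space UNIV)"
    and joint_law: "\<And>n \<xi> g.
           measure \<Omega> {\<omega>\<in>space \<Omega>. \<forall>k\<le>n. Xi k \<omega> = \<xi> k \<and> (\<forall>m\<in>{1..M}. gamma m k \<omega> = g m k)}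
           = (if \<forall>k\<le>n. \<xi> k \<in> {1..nB}
              then pi0 (\<xi> 0) * (\<Prod>k<n. p (\<xi> k) (\<xi> (Suc k)))
                   * (\<Prod>k\<le>n. \<Prod>m\<in>{1..M}. if g m k then phi m (\<xi> k) else 1 - phi m (\<xi> k))
              else 0)"
begin

definition letter_init :: "nat \<times> nat set \<Rightarrow> real" where
  "letter_init y = pi0 (fst y) * link_prob M phi (fst y) (snd y)"

definition letter_trans :: "nat \<times> nat set \<Rightarrow> nat \<times> nat set \<Rightarrow> real" where
  "letter_trans x y = p (fst x) (fst y) * link_prob M phi (fst y) (snd y)"

definition alphabet :: "(nat \<times> nat set) set" where
  "alphabet = {1..nB} \<times> Pow {1..M}"

lemma sum_alphabet:
  "(\<Sum>y\<in>alphabet. g (fst y) * link_prob M phi (fst y) (snd y)) = (\<Sum>j\<in>{1..nB}. g j)"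
proof -
  have "(\<Sum>y\<in>alphabet. g (fst y) * link_prob M phi (fst y) (snd y))
      = (\<Sum>j\<in>{1..nB}. g j * (\<Sum>S\<in>Pow {1..M}. link_prob M phi j S))"
    by (simp add: alphabet_def sum.cartesian_product case_prod_beta sum_distrib_left)
  also have "\<dots> = (\<Sum>j\<in>{1..nB}. g j)"
    by (simp only: sum_link_prob mult_1_right)
  finally show ?thesis .
qed

sublocale letters: finite_markov_chain alphabet letter_init letter_trans
proof
  show "(\<Sum>y\<in>alphabet. letter_init y) = 1"
    unfolding letter_init_def sum_alphabet by (rule sum_pi0)
  fix x assume "x \<in> alphabet"
  then have "fst x \<in> {1..nB}" by (auto simp: alphabet_def)
  then show "(\<Sum>y\<in>alphabet. letter_trans x y) = 1"
    unfolding letter_trans_def sum_alphabet by (rule sum_p)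
qed (auto simp: alphabet_def letter_init_def letter_trans_def intro!: mult_nonneg_nonneg
    link_prob_nonneg pi0_nonneg p_nonneg phi_prob)

definition successes :: "nat \<Rightarrow> 'w \<Rightarrow> nat set" where
  "successes k \<omega> = {m\<in>{1..M}. gamma m k \<omega>}"

definition letter_path :: "nat \<Rightarrow> 'w \<Rightarrow> (nat \<times> nat set) list" where
  "letter_path n \<omega> = map (\<lambda>k. (Xi k \<omega>, successes k \<omega>)) [0..<Suc n]"

lemma length_letter_path: "length (letter_path n \<omega>) = Suc n"
  by (simp add: letter_path_def del: upt_Suc)

lemma letter_path_nth: "t \<le> n \<Longrightarrow> letter_path n \<omega> ! t = (Xi t \<omega>, successes t \<omega>)"
  by (simp add: letter_path_def del: upt_Suc)

lemma nth_path_in_alphabet: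
  assumes "v \<in> letters.paths n" "k \<le> n"
  shows "fst (v ! k) \<in> {1..nB}" "snd (v ! k) \<subseteq> {1..M}"
  using letters.nth_path_in_states[OF assms] by (auto simp: alphabet_def)

lemma letter_path_eq_iff:
  assumes "v \<in> letters.paths n"
  shows "letter_path n \<omega> = v
    \<longleftrightarrow> (\<forall>k\<le>n. Xi k \<omega> = fst (v ! k) \<and> (\<forall>m\<in>{1..M}. gamma m k \<omega> = (m \<in> snd (v ! k))))"
proof -
  have len: "length v = Suc n" using assms by (simp add: letters.paths_def)
  have letter_eq_iff: "(Xi k \<omega>, successes k \<omega>) = v ! k
      \<longleftrightarrow> Xi k \<omega> = fst (v ! k) \<and> (\<forall>m\<in>{1..M}. gamma m k \<omega> = (m \<in> snd (v ! k)))"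
    if "k \<le> n" for k
  proof -
    have "snd (v ! k) \<subseteq> {1..M}" by (rule nth_path_in_alphabet[OF assms that])
    then have "successes k \<omega> = snd (v ! k) \<longleftrightarrow> (\<forall>m\<in>{1..M}. gamma m k \<omega> = (m \<in> snd (v ! k)))"
      unfolding successes_def by blast
    then show ?thesis by (auto simp: prod_eq_iff)
  qed
  have "letter_path n \<omega> = v \<longleftrightarrow> (\<forall>k\<le>n. (Xi k \<omega>, successes k \<omega>) = v ! k)"
    unfolding list_eq_iff_nth_eq
    by (simp add: len letter_path_nth less_Suc_eq_le) (simp add: letter_path_def less_Suc_eq_le del: upt_Suc)
  with letter_eq_iff show ?thesis by simp
qed


lemma sets_letter_path_cylinder:
  assumes "v \<in> letters.paths n"
  shows "{\<omega>\<in>space \<Omega>. letter_path n \<omega> = v} \<in> sets \<Omega>"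
proof -
  note [measurable] = Xi_measurable gamma_measurable
  have "Measurable.pred \<Omega> (\<lambda>\<omega>. \<forall>k\<le>n. Xi k \<omega> = fst (v ! k) \<and> (\<forall>m\<in>{1..M}. gamma m k \<omega> = (m \<in> snd (v ! k))))"
    by measurable
  then show ?thesis by (simp add: letter_path_eq_iff[OF assms] pred_def)
qed

lemma path_prob_eq:
  assumes "v \<in> letters.paths n"
  shows "letters.path_prob v = pi0 (fst (v ! 0)) * (\<Prod>k<n. p (fst (v ! k)) (fst (v ! Suc k)))
    * (\<Prod>k\<le>n. link_prob M phi (fst (v ! k)) (snd (v ! k)))"
proof -
  have "length v = Suc n" using assms by (simp add: letters.paths_def)
  moreover have "hd v = v ! 0" using letters.paths_nonempty[OF assms] by (simp add: hd_conv_nth)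
  ultimately show ?thesis
    by (simp add: letters.path_prob_def letter_init_def letter_trans_def
        prod.distrib prod.atMost_shift)
qed

lemma measure_letter_path_cylinder:
  assumes "v \<in> letters.paths n"
  shows "measure \<Omega> {\<omega>\<in>space \<Omega>. letter_path n \<omega> = v} = letters.path_prob v"
proof -
  have "\<forall>k\<le>n. fst (v ! k) \<in> {1..nB}" using nth_path_in_alphabet(1)[OF assms] by blast
  then show ?thesis
    using joint_law[of n "\<lambda>k. fst (v ! k)" "\<lambda>m k. m \<in> snd (v ! k)"]
    by (simp add: letter_path_eq_iff[OF assms] path_prob_eq[OF assms] link_prob_def)
qed

lemma integral_le_expectation_paths:
  assumes "\<And>\<omega>. \<omega> \<in> space \<Omega> \<Longrightarrow> f \<omega> = h (letter_path n \<omega>)"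
    and "\<And>v. v \<in> letters.paths n \<Longrightarrow> 0 \<le> h v"
  shows "integral\<^sup>L \<Omega> f \<le> (\<Sum>v\<in>letters.paths n. letters.path_prob v * h v)"
proof -
  have "integral\<^sup>L \<Omega> f
      \<le> (\<Sum>v\<in>letters.paths n. measure \<Omega> {\<omega>\<in>space \<Omega>. letter_path n \<omega> = v} * h v)"
    using letters.sum_path_prob[of n] letters.path_prob_nonneg assms(2)
    by (intro integral_le_sum_if_finite_valued[OF prob_space letters.finite_paths]
        sets_letter_path_cylinder assms(1))
      (simp_all add: measure_letter_path_cylinder sum_nonneg)
  then show ?thesis by (simp add: measure_letter_path_cylinder)
qed


definition expected_norm :: "(nat \<Rightarrow> real^'n^'n) \<Rightarrow> (nat \<Rightarrow> real^'n^'n) \<Rightarrow> (nat \<Rightarrow> real^'l^'l)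
    \<Rightarrow> (nat set \<Rightarrow> real^'n^'l) \<Rightarrow> real^'n^'n \<Rightarrow> nat \<Rightarrow> real" where
  "expected_norm A Q R C P0 n = (\<Sum>v\<in>letters.paths n.
     letters.path_prob v * spec_norm (kf_run A Q R (\<lambda>y. C (snd y)) P0 v))"

lemma expected_norm_nonneg: "0 \<le> expected_norm A Q R C P0 n"
  unfolding expected_norm_def
  by (intro sum_nonneg mult_nonneg_nonneg letters.path_prob_nonneg spec_norm_nonneg)

lemma expected_trace_le_expected_norm:
  fixes A Q :: "nat \<Rightarrow> real^'n^'n"
  assumes "\<And>k. psd (Q k)" "psd P0" "\<And>k. pd (R k)"
  shows "(\<integral>\<omega>. trace (kf_P A Q R (\<lambda>t. C (successes t \<omega>)) P0 (Suc n)) \<partial>\<Omega>)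
    \<le> real CARD('n) * expected_norm A Q R C P0 n"
proof -
  let ?run = "kf_run A Q R (\<lambda>y. C (snd y)) P0"
  have "kf_P A Q R (\<lambda>t. C (successes t \<omega>)) P0 (Suc n) = ?run (letter_path n \<omega>)" for \<omega>
    unfolding kf_run_def length_letter_path
    by (rule kf_P_cong) (simp add: letter_path_nth less_Suc_eq_le)
  then have "(\<integral>\<omega>. trace (kf_P A Q R (\<lambda>t. C (successes t \<omega>)) P0 (Suc n)) \<partial>\<Omega>)
      \<le> (\<Sum>v\<in>letters.paths n. letters.path_prob v * trace (?run v))"
    using assms unfolding kf_run_def
    by (intro integral_le_expectation_paths) (simp_all add: trace_nonneg_if_psd psd_kf_P)
  also have "\<dots> \<le> (\<Sum>v\<in>letters.paths n. letters.path_prob v * (real CARD('n) * spec_norm (?run v)))"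
    by (intro sum_mono mult_left_mono trace_le_spec_norm letters.path_prob_nonneg)
  finally show ?thesis by (simp add: expected_norm_def sum_distrib_left mult_ac)
qed

lemma expected_norm_Suc_le:
  fixes A Q :: "nat \<Rightarrow> real^'n^'n"
  assumes cov: "\<And>k. psd (Q k)" "psd P0" "\<And>k. pd (R k)"
    and step: "\<And>k S P. S \<in> Pow {1..M} \<Longrightarrow> psd P \<Longrightarrow> spec_norm (kf_step (A k) (Q k) (R k) (C S) P)
           \<le> (spec_norm (A k))\<^sup>2 * (if full_col_rank (C S) then 0 else 1) * spec_norm P + c"
    and mean: "\<And>x k. x \<in> alphabet \<Longrightarrow>
           (spec_norm (A k))\<^sup>2 * (\<Sum>y\<in>alphabet. letter_trans x y * (if full_col_rank (C (snd y)) then 0 else 1)) \<le> \<rho>"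
  shows "expected_norm A Q R C P0 (Suc n) \<le> \<rho> * expected_norm A Q R C P0 n + c"
  unfolding expected_norm_def
proof (rule letters.expectation_paths_Suc_le)
  let ?b = "\<lambda>y. (spec_norm (A (Suc n)))\<^sup>2 * (if full_col_rank (C (snd y)) then 0 else 1)"
  show "(\<Sum>y\<in>alphabet. letter_trans x y * ?b y) \<le> \<rho>" if "x \<in> alphabet" for x
    using mean[OF that, of "Suc n"] by (simp add: sum_distrib_left mult_ac)
  fix v y assume v: "v \<in> letters.paths n" and y: "y \<in> alphabet"
  have "length v = Suc n" using v unfolding letters.paths_def by simp
  moreover have "snd y \<in> Pow {1..M}" using y by (auto simp: alphabet_def)
  moreover have "psd (kf_run A Q R (\<lambda>y. C (snd y)) P0 v)"
    unfolding kf_run_def by (rule psd_kf_P[OF cov])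
  ultimately show "spec_norm (kf_run A Q R (\<lambda>y. C (snd y)) P0 (v @ [y]))
      \<le> ?b y * spec_norm (kf_run A Q R (\<lambda>y. C (snd y)) P0 v) + c"
    using step[of "snd y" _ "Suc n"] by (simp add: kf_run_snoc)
qed (simp add: spec_norm_nonneg)

lemma nu_eq_sum_letter_trans:
  "nu {1..nB} p M par sensor_of Cfull phi (fst x)
    = (\<Sum>y\<in>alphabet. letter_trans x y
         * (if full_col_rank (stackedC sensor_of Cfull (theta par (snd y))) then 0 else 1))"
  by (simp add: nu_def prob_rank_def_def alphabet_def letter_trans_def link_prob_def
      sum.cartesian_product case_prod_beta sum_distrib_left mult_ac)


theorem kf_exponentially_bounded:
  fixes A Q :: "nat \<Rightarrow> real^'n^'n" and R :: "nat \<Rightarrow> real^'l^'l" and Cfull :: "real^'n^'l"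
  assumes bounded: "\<And>k. spec_norm (A k) \<le> c \<and> spec_norm (Q k) \<le> c \<and> spec_norm (R k) \<le> c"
    and cov: "\<And>k. psd (Q k)" "psd P0" "\<And>k. pd (R k)"
    and "0 \<le> \<rho>" "\<rho> < 1"
    and stable: "\<And>i k. i \<in> {1..nB} \<Longrightarrow> nu {1..nB} p M par sensor_of Cfull phi i * (spec_norm (A k))\<^sup>2 \<le> \<rho>"
  shows "\<exists>\<alpha> \<beta> \<rho>'. 0 \<le> \<rho>' \<and> \<rho>' < 1 \<and> (\<forall>k. (\<integral>\<omega>. trace (kf_P A Q R
      (\<lambda>t. stackedC sensor_of Cfull (theta par (successes t \<omega>))) P0 k) \<partial>\<Omega>) \<le> \<alpha> * \<rho>' ^ k + \<beta>)"
proof -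
  define C where "C S = stackedC sensor_of Cfull (theta par S)" for S
  have "finite (C ` Pow {1..M})" by simp
  then obtain c' where "0 \<le> c'" and step_image: "\<And>k C' P. C' \<in> C ` Pow {1..M} \<Longrightarrow> psd P \<Longrightarrow>
      spec_norm (kf_step (A k) (Q k) (R k) C' P)
        \<le> (spec_norm (A k))\<^sup>2 * (if full_col_rank C' then 0 else 1) * spec_norm P + c'"
    using kf_step_norm_le_uniform[of "C ` Pow {1..M}" A c Q R, OF _ bounded cov(1,3)] by blast
  have recursion: "expected_norm A Q R C P0 (Suc n) \<le> \<rho> * expected_norm A Q R C P0 n + c'" for n
  proof (rule expected_norm_Suc_le[OF cov step_image[OF imageI]])
    fix x k assume "x \<in> alphabet"
    then have "fst x \<in> {1..nB}" by (auto simp: alphabet_def)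
    with stable[of "fst x" k] show "(spec_norm (A k))\<^sup>2 * (\<Sum>y\<in>alphabet. letter_trans x y
        * (if full_col_rank (C (snd y)) then 0 else 1)) \<le> \<rho>"
      unfolding C_def nu_eq_sum_letter_trans[symmetric] by (simp add: mult.commute)
  qed
  have trace_bound: "(\<integral>\<omega>. trace (kf_P A Q R (\<lambda>t. C (successes t \<omega>)) P0 (Suc n)) \<partial>\<Omega>)
      \<le> real CARD('n) * expected_norm A Q R C P0 0 * \<rho> ^ n + real CARD('n) * (c' / (1 - \<rho>))" for n
  proof -
    have "(\<integral>\<omega>. trace (kf_P A Q R (\<lambda>t. C (successes t \<omega>)) P0 (Suc n)) \<partial>\<Omega>)
        \<le> real CARD('n) * expected_norm A Q R C P0 n"
      by (rule expected_trace_le_expected_norm[OF cov])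
    also have "\<dots> \<le> real CARD('n) * (\<rho> ^ n * expected_norm A Q R C P0 0 + c' / (1 - \<rho>))"
      using affine_recursion_bound[where E = "expected_norm A Q R C P0",
          OF \<open>0 \<le> \<rho>\<close> \<open>\<rho> < 1\<close> \<open>0 \<le> c'\<close> recursion]
      by (rule mult_left_mono) simp
    finally show ?thesis by (simp add: algebra_simps)
  qed
  have "\<exists>\<alpha> \<beta> \<rho>'. 0 \<le> \<rho>' \<and> \<rho>' < 1 \<and> (\<forall>k. (\<integral>\<omega>. trace (kf_P A Q R
      (\<lambda>t. C (successes t \<omega>)) P0 k) \<partial>\<Omega>) \<le> \<alpha> * \<rho>' ^ k + \<beta>)"
    by (rule exponential_bound_if_shifted_bound[OF _ \<open>0 \<le> \<rho>\<close> \<open>\<rho> < 1\<close> trace_bound])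
      (simp add: expected_norm_nonneg)
  then show ?thesis by (simp add: C_def)
qed

end

theorem theorem1:
  fixes A Q :: "nat \<Rightarrow> real^'n^'n"
    and R :: "nat \<Rightarrow> real^'l^'l"
    and P0 :: "real^'n^'n"
    and Cfull :: "real^'n^'l" and sensor_of :: "'l \<Rightarrow> nat"
    and M nB :: nat and par :: "nat \<Rightarrow> nat"
    and p :: "nat \<Rightarrow> nat \<Rightarrow> real" and pi0 :: "nat \<Rightarrow> real"
    and phi :: "nat \<Rightarrow> nat \<Rightarrow> real"
    and \<Omega> :: "'w measure"
    and Xi :: "nat \<Rightarrow> 'w \<Rightarrow> nat" and gamma :: "nat \<Rightarrow> nat \<Rightarrow> 'w \<Rightarrow> bool"
  assumes "prob_space \<Omega>"
    and "\<exists>c. \<forall>k. spec_norm (A k) \<le> c \<and> spec_norm (Q k) \<le> c \<and> spec_norm (R k) \<le> c"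
    and "\<forall>k. psd (Q k)" and "psd P0"
    and "\<forall>k. pd (R k)"
    and "\<forall>k r s. sensor_of r \<noteq> sensor_of s \<longrightarrow> R k $ r $ s = 0"
    and "\<forall>r. sensor_of r \<in> {1..M}" and "\<forall>m\<in>{1..M}. \<exists>r. sensor_of r = m"
    and "is_tree M par"
    and "nB \<ge> 1"
    and "\<forall>i\<in>{1..nB}. \<forall>j\<in>{1..nB}. 0 \<le> p i j" and "\<forall>i\<in>{1..nB}. (\<Sum>j\<in>{1..nB}. p i j) = 1"
    and "\<forall>i\<in>{1..nB}. 0 \<le> pi0 i" and "(\<Sum>i\<in>{1..nB}. pi0 i) = 1"
    and "\<forall>m\<in>{1..M}. \<forall>j\<in>{1..nB}. 0 \<le> phi m j \<and> phi m j \<le> 1"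
    and "\<forall>k. Xi k \<in> measurable \<Omega> (count_space UNIV)"
    and "\<forall>m k. gamma m k \<in> measurable \<Omega> (count_space UNIV)"
    \<comment> \<open>joint law: Xi Markov with transition p; given the network states, the link
        successes are independent over m and k with Pr{gamma_m(k)=1 | Xi(k)=j} = phi m j\<close>
    and "\<forall>n (\<xi>::nat \<Rightarrow> nat) (g::nat \<Rightarrow> nat \<Rightarrow> bool).
           measure \<Omega> {\<omega>\<in>space \<Omega>. \<forall>k\<le>n. Xi k \<omega> = \<xi> k \<and> (\<forall>m\<in>{1..M}. gamma m k \<omega> = g m k)}
           = (if \<forall>k\<le>n. \<xi> k \<in> {1..nB}
              then pi0 (\<xi> 0) * (\<Prod>k<n. p (\<xi> k) (\<xi> (Suc k)))
                   * (\<Prod>k\<le>n. \<Prod>m\<in>{1..M}. if g m k then phi m (\<xi> k) else 1 - phi m (\<xi> k))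
              else 0)"
    and "\<exists>\<rho>. 0 \<le> \<rho> \<and> \<rho> < 1 \<and>
           (\<forall>i\<in>{1..nB}. \<forall>k. nu {1..nB} p M par sensor_of Cfull phi i * (spec_norm (A k))\<^sup>2 \<le> \<rho>)"
  shows "\<exists>\<alpha> \<beta> \<rho>'. 0 \<le> \<rho>' \<and> \<rho>' < 1 \<and>
           (\<forall>k. (\<integral>\<omega>. trace (kf_P A Q R
                   (\<lambda>t. stackedC sensor_of Cfull (theta par {i\<in>{1..M}. gamma i t \<omega>})) P0 k) \<partial>\<Omega>)
                \<le> \<alpha> * \<rho>' ^ k + \<beta>)"
proof -
  interpret link_network \<Omega> nB M pi0 p phi Xi gamma
    by (rule link_network.intro) (use assms(1,11-18) in simp_all)
  obtain c where "\<forall>k. spec_norm (A k) \<le> c \<and> spec_norm (Q k) \<le> c \<and> spec_norm (R k) \<le> c"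
    using assms(2) by blast
  moreover obtain \<rho> where "0 \<le> \<rho>" "\<rho> < 1"
    "\<forall>i\<in>{1..nB}. \<forall>k. nu {1..nB} p M par sensor_of Cfull phi i * (spec_norm (A k))\<^sup>2 \<le> \<rho>"
    using assms(19) by blast
  ultimately show ?thesis
    using kf_exponentially_bounded[of A c Q R P0 \<rho> par sensor_of Cfull] assms(3-5)
    by (simp add: successes_def)
qed

end
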